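(* For Lebesgue almost every $x\in\mathbb{R}$, both the Fréchet superdifferential $\partial^+T(x)$ and the Fréchet subdifferential $\partial T(x)$ of the Takagi function are empty.
   Context: $T(x)=\sum_{n=0}^\infty 2^{-n}\operatorname{dist}(2^nx,\mathbb{Z})$. Fréchet superdifferential: $\partial^+f(x)=\{\xi: \limsup_{h\to0}\frac{f(x+h)-f(x)-\xi h}{|h|}\le0\}$; Fréchet subdifferential: $\partial f(x)=\{\xi: \liminf_{h\to0}\frac{f(x+h)-f(x)-\xi h}{|h|}\ge0\}$. *)

theory Defs
  imports "HOL-Analysis.Analysis"
begin

definition takagi :: "real \<Rightarrow> real" where
  "takagi x = (\<Sum>n. (1/2)^n * infdist ((2::real)^n * x) \<int>)"

definition frechet_superdiff :: "(real \<Rightarrow> real) \<Rightarrow> real \<Rightarrow> real set" where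
  "frechet_superdiff f x = {\<xi>. Limsup (at (0::real))
      (\<lambda>h. ereal ((f (x + h) - f x - \<xi> * h) / \<bar>h\<bar>)) \<le> 0}"

definition frechet_subdiff :: "(real \<Rightarrow> real) \<Rightarrow> real \<Rightarrow> real set" where
  "frechet_subdiff f x = {\<xi>. Liminf (at (0::real))
      (\<lambda>h. ereal ((f (x + h) - f x - \<xi> * h) / \<bar>h\<bar>)) \<ge> 0}"

end

theory Submission
  imports Defs
begin

text \<open>
  On the dyadic interval of length 2^-n containing x the Takagi function is self-affine:
  T(a + s/2^n) = T(a) + D s/2^n + T(s)/2^n for 0 <= s <= 1, where a is the left endpoint and
  D = sum of the slopes +-1 of dist(2^j x, Z) for j < n, i.e. +1 for every binary digit 0 of x
  and -1 for every digit 1. Testing a Frechet super- or subgradient xi at the two endpoints and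
  using 0 <= T <= 1 shows that, for large n, the walk c = D - xi is pushed back towards 0 by the
  next digit (superdifferential) or pushed further away (subdifferential). A bounded walk cannot
  survive arbitrarily long runs of zeros; a repelled walk is driven below -4 by a run of eight
  ones and then forbids every later zero. Both kinds of runs occur at almost every x, since the
  set of points avoiding a run of length L is invariant under x \<mapsto> frac (2^L x) and misses one of
  the 2^L subintervals of [0,1), so its measure there is at most (1 - 2^-L) times itself.
\<close>

section \<open>Distance to the integers\<close>

lemma infdist_Ints_eq_min_frac: "infdist (w::real) \<int> = min (frac w) (1 - frac w)"
proof (rule antisym)
  let ?m = "if frac w \<le> 1 - frac w then of_int \<lfloor>w\<rfloor> else of_int \<lfloor>w\<rfloor> + 1 :: real"
  have "?m \<in> \<int>" by auto
  from infdist_le[OF this, of w] show "infdist w \<int> \<le> min (frac w) (1 - frac w)"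
    using frac_lt_1[of w] frac_ge_0[of w] by (auto simp: dist_real_def frac_def split: if_splits)
  have "min (frac w) (1 - frac w) \<le> dist w m" if "m \<in> \<int>" for m
  proof -
    from that obtain k where k: "m = of_int k" by (auto elim: Ints_cases)
    have "k \<le> \<lfloor>w\<rfloor> \<or> \<lfloor>w\<rfloor> + 1 \<le> k" by linarith
    then have "real_of_int k \<le> of_int \<lfloor>w\<rfloor> \<or> of_int \<lfloor>w\<rfloor> + 1 \<le> real_of_int k"
      by (metis of_int_le_iff of_int_add of_int_1)
    then show ?thesis unfolding k dist_real_def frac_def by auto
  qed
  then show "min (frac w) (1 - frac w) \<le> infdist w \<int>"
    unfolding infdist_def by (auto intro: cINF_greatest)
qed

lemma infdist_Ints_add_of_int: "infdist ((w::real) + of_int k) \<int> = infdist w \<int>"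
  by (simp add: infdist_Ints_eq_min_frac)

lemma infdist_Ints_le_half: "infdist (w::real) \<int> \<le> 1/2"
  by (simp add: infdist_Ints_eq_min_frac min_def)

lemma infdist_Ints_left_half:
  assumes "of_int i \<le> w" "w \<le> of_int i + 1/2"
  shows "infdist w \<int> = w - of_int i"
proof -
  have "\<lfloor>w\<rfloor> = i" using assms by linarith
  then show ?thesis using assms by (simp add: infdist_Ints_eq_min_frac frac_def)
qed

lemma infdist_Ints_right_half:
  assumes "of_int i + 1/2 \<le> w" "w \<le> of_int i + 1"
  shows "infdist w \<int> = of_int i + 1 - w"
proof (cases "w = of_int i + 1")
  case False
  then have "\<lfloor>w\<rfloor> = i" using assms by linarith
  then show ?thesis using assms by (simp add: infdist_Ints_eq_min_frac frac_def)
qed (simp add: infdist_Ints_eq_min_frac)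

definition tent_slope :: "real \<Rightarrow> real" where
  "tent_slope x = (if frac x < 1/2 then 1 else -1)"

lemma infdist_Ints_diff_on_half_interval:
  assumes "of_int \<lfloor>2*x\<rfloor> / 2 \<le> w1" "w1 \<le> w2" "w2 \<le> (of_int \<lfloor>2*x\<rfloor> + 1) / 2"
  shows "infdist w2 \<int> - infdist w1 \<int> = tent_slope x * (w2 - w1)"
proof (cases "even \<lfloor>2*x\<rfloor>")
  case True
  then obtain i where i: "\<lfloor>2*x\<rfloor> = 2*i" by auto
  then have x: "of_int i \<le> x" "x < of_int i + 1/2" using floor_le_iff[of "2*x"] by linarith+
  then have "\<lfloor>x\<rfloor> = i" by linarith
  with x have "tent_slope x = 1" by (simp add: tent_slope_def frac_def)
  moreover have "infdist w1 \<int> = w1 - of_int i" "infdist w2 \<int> = w2 - of_int i"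
    using assms i by (auto intro!: infdist_Ints_left_half)
  ultimately show ?thesis by simp
next
  case False
  then obtain i where i: "\<lfloor>2*x\<rfloor> = 2*i + 1" by (metis oddE)
  then have x: "of_int i + 1/2 \<le> x" "x < of_int i + 1" using floor_le_iff[of "2*x"] by linarith+
  then have "\<lfloor>x\<rfloor> = i" by linarith
  with x have "tent_slope x = -1" by (simp add: tent_slope_def frac_def)
  moreover have "infdist w1 \<int> = of_int i + 1 - w1" "infdist w2 \<int> = of_int i + 1 - w2"
    using assms i by (auto intro!: infdist_Ints_right_half)
  ultimately show ?thesis by simp
qed

section \<open>Dyadic self-affinity of the Takagi function\<close>

lemma summable_takagi: "summable (\<lambda>n. (1/2::real)^n * infdist ((2::real)^n * x) \<int>)"
proof (rule summable_comparison_test[of _ "\<lambda>n. (1/2::real)^n"])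
  have "norm ((1/2::real)^n * infdist ((2::real)^n * x) \<int>) \<le> (1/2)^n" for n
    using infdist_Ints_le_half[of "2^n * x"] infdist_nonneg[of "2^n * x" \<int>]
    by (simp add: abs_mult mult_left_le)
  then show "\<exists>N. \<forall>n\<ge>N. norm ((1/2::real)^n * infdist ((2::real)^n * x) \<int>) \<le> (1/2)^n"
    by blast
qed simp

lemma takagi_nonneg: "0 \<le> takagi x"
  unfolding takagi_def by (rule suminf_nonneg[OF summable_takagi]) (simp add: infdist_nonneg)

lemma takagi_le_one: "takagi x \<le> 1"
proof -
  have "takagi x \<le> (\<Sum>n. (1/2::real)^n * (1/2))"
    unfolding takagi_def
    by (rule suminf_le) (use infdist_Ints_le_half in \<open>auto intro!: mult_left_mono summable_mult2 summable_takagi\<close>)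
  also have "\<dots> = 1"
    using sums_mult2[OF geometric_sums[of "1/2::real"], of "1/2"] by (simp add: sums_iff)
  finally show ?thesis .
qed

lemma takagi_functional_equation: "takagi x = infdist x \<int> + takagi (2*x) / 2"
proof -
  have "takagi x = (\<Sum>n. (1/2::real)^Suc n * infdist ((2::real)^Suc n * x) \<int>) + infdist x \<int>"
    unfolding takagi_def using suminf_split_head[OF summable_takagi[of x]] by simp
  also have "(\<lambda>n. (1/2::real)^Suc n * infdist ((2::real)^Suc n * x) \<int>)
      = (\<lambda>n. 1/2 * ((1/2::real)^n * infdist ((2::real)^n * (2*x)) \<int>))"
    by (simp add: mult.assoc mult.left_commute)
  also have "(\<Sum>n. 1/2 * ((1/2::real)^n * infdist ((2::real)^n * (2*x)) \<int>)) = 1/2 * takagi (2*x)"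
    unfolding takagi_def by (rule suminf_mult[OF summable_takagi])
  finally show ?thesis by simp
qed

lemma takagi_add_of_int: "takagi (x + of_int k) = takagi x"
proof -
  have "infdist ((2::real)^n * (x + of_int k)) \<int> = infdist ((2::real)^n * x) \<int>" for n
    using infdist_Ints_add_of_int[of "2^n * x" "2^n * k"] by (simp add: distrib_left)
  then show ?thesis unfolding takagi_def by simp
qed

lemma takagi_of_int: "takagi (of_int k) = 0"
  using takagi_add_of_int[of 0 k] by (simp add: takagi_def)

definition dyadic_floor :: "nat \<Rightarrow> real \<Rightarrow> real" where
  "dyadic_floor n x = of_int \<lfloor>2^n * x\<rfloor> / 2^n"

definition dyadic_frac :: "nat \<Rightarrow> real \<Rightarrow> real" where
  "dyadic_frac n x = frac (2^n * x)"

text \<open>The slope of the n-th partial sum of the Takagi series on the dyadic interval of length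
  2^-n containing x.\<close>
definition partial_slope :: "nat \<Rightarrow> real \<Rightarrow> real" where
  "partial_slope n x = (\<Sum>j<n. tent_slope (2^j * x))"

lemma dyadic_floor_plus_frac: "dyadic_floor n x + dyadic_frac n x / 2^n = x"
  unfolding dyadic_floor_def dyadic_frac_def frac_def by (simp add: field_simps)

lemma dyadic_frac_bounds: "0 \<le> dyadic_frac n x" "dyadic_frac n x < 1"
  unfolding dyadic_frac_def by (simp_all add: frac_lt_1)

lemma dyadic_floor_Suc: "dyadic_floor (Suc n) x = dyadic_floor n (2*x) / 2"
  unfolding dyadic_floor_def by (simp add: mult_ac)

lemma partial_slope_Suc_shift: "partial_slope (Suc n) x = tent_slope x + partial_slope n (2*x)"
  unfolding partial_slope_def sum.lessThan_Suc_shift by (simp add: mult_ac)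

lemma partial_slope_Suc:
  "partial_slope (Suc n) x = partial_slope n x + (if dyadic_frac n x < 1/2 then 1 else -1)"
  by (simp add: partial_slope_def tent_slope_def dyadic_frac_def)

lemma dyadic_floor_bounds:
  "of_int \<lfloor>u\<rfloor> \<le> dyadic_floor n u" "dyadic_floor n u + 1/2^n \<le> of_int \<lfloor>u\<rfloor> + 1"
proof -
  have "(2::int)^n * \<lfloor>u\<rfloor> \<le> \<lfloor>2^n * u\<rfloor>"
    by (simp add: le_floor_iff)
  then have "real_of_int ((2::int)^n * \<lfloor>u\<rfloor>) \<le> of_int \<lfloor>2^n * u\<rfloor>"
    by (simp only: of_int_le_iff)
  then show "of_int \<lfloor>u\<rfloor> \<le> dyadic_floor n u"
    unfolding dyadic_floor_def by (simp add: field_simps)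
  have "\<lfloor>2^n * u\<rfloor> < (2::int)^n * (\<lfloor>u\<rfloor> + 1)"
    unfolding floor_less_iff by (simp add: mult_strict_left_mono)
  then have "\<lfloor>2^n * u\<rfloor> + 1 \<le> (2::int)^n * (\<lfloor>u\<rfloor> + 1)" by linarith
  then have "real_of_int (\<lfloor>2^n * u\<rfloor> + 1) \<le> of_int ((2::int)^n * (\<lfloor>u\<rfloor> + 1))"
    by (simp only: of_int_le_iff)
  then show "dyadic_floor n u + 1/2^n \<le> of_int \<lfloor>u\<rfloor> + 1"
    unfolding dyadic_floor_def by (simp add: field_simps)
qed

lemma takagi_dyadic_self_affine:
  assumes "0 \<le> s" "s \<le> 1"
  shows "takagi (dyadic_floor n x + s/2^n)
    = takagi (dyadic_floor n x) + partial_slope n x * s / 2^n + takagi s / 2^n"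
proof (induction n arbitrary: x)
  case 0
  show ?case
    using takagi_add_of_int[of s "\<lfloor>x\<rfloor>"]
    by (simp add: dyadic_floor_def partial_slope_def takagi_of_int add.commute)
next
  case (Suc n)
  define b where "b = dyadic_floor n (2*x)"
  define z where "z = b + s/2^n"
  have b: "of_int \<lfloor>2*x\<rfloor> \<le> b" "b + 1/2^n \<le> of_int \<lfloor>2*x\<rfloor> + 1"
    unfolding b_def by (rule dyadic_floor_bounds)+
  have "0 \<le> s/2^n" "s/2^n \<le> 1/2^n" using assms by (simp_all add: divide_right_mono)
  with b have "of_int \<lfloor>2*x\<rfloor> \<le> b" "b \<le> z" "z \<le> of_int \<lfloor>2*x\<rfloor> + 1"
    unfolding z_def by linarith+
  then have "of_int \<lfloor>2*x\<rfloor> / 2 \<le> b/2" "b/2 \<le> z/2" "z/2 \<le> (of_int \<lfloor>2*x\<rfloor> + 1) / 2"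
    by simp_all
  then have slope: "infdist (z/2) \<int> - infdist (b/2) \<int> = tent_slope x * s / 2^Suc n"
    by (subst infdist_Ints_diff_on_half_interval) (auto simp: z_def field_simps)
  have "takagi (dyadic_floor (Suc n) x + s/2^Suc n) = infdist (z/2) \<int> + takagi z / 2"
    using takagi_functional_equation[of "z/2"]
    by (simp add: dyadic_floor_Suc z_def b_def add_divide_distrib mult.commute)
  also have "takagi z = takagi b + partial_slope n (2*x) * s / 2^n + takagi s / 2^n"
    unfolding z_def b_def by (rule Suc.IH)
  also have "infdist (z/2) \<int> = infdist (b/2) \<int> + tent_slope x * s / 2^Suc n"
    using slope by simp
  also have "infdist (b/2) \<int> = takagi (dyadic_floor (Suc n) x) - takagi b / 2"
    using takagi_functional_equation[of "b/2"] by (simp add: dyadic_floor_Suc b_def)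
  finally show ?case
    by (simp add: partial_slope_Suc_shift algebra_simps add_divide_distrib divide_divide_eq_left)
qed

lemma takagi_dyadic_increment:
  fixes n :: nat and x s :: real
  assumes "0 \<le> s" "s \<le> 1"
  defines "t \<equiv> dyadic_frac n x"
  shows "2^n * (takagi (x + (s - t) / 2^n) - takagi x)
    = partial_slope n x * (s - t) + takagi s - takagi t"
proof -
  have x: "x = dyadic_floor n x + t/2^n" and xs: "x + (s - t) / 2^n = dyadic_floor n x + s/2^n"
    using dyadic_floor_plus_frac[of n x] by (simp_all add: t_def diff_divide_distrib)
  have "takagi x = takagi (dyadic_floor n x) + partial_slope n x * t / 2^n + takagi t / 2^n"
    by (subst x) (rule takagi_dyadic_self_affine; use dyadic_frac_bounds[of n x] in \<open>simp add: t_def\<close>)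
  then show ?thesis
    unfolding xs takagi_dyadic_self_affine[OF assms(1,2)] by (simp add: field_simps)
qed

section \<open>Frechet differentials at dyadic scales\<close>

lemma eventually_at_0_dyadic:
  fixes P :: "real \<Rightarrow> bool"
  assumes "eventually P (at 0)"
  shows "\<exists>N. \<forall>n\<ge>N. \<forall>h. h \<noteq> 0 \<longrightarrow> \<bar>h\<bar> \<le> 1/2^n \<longrightarrow> P h"
proof -
  obtain d where d: "0 < d" "\<And>h. h \<noteq> 0 \<Longrightarrow> \<bar>h\<bar> < d \<Longrightarrow> P h"
    using assms unfolding eventually_at by (auto simp: dist_real_def)
  obtain N where N: "(1/2::real)^N < d"
    using real_arch_pow_inv[OF d(1), of "1/2"] by auto
  have "P h" if "N \<le> n" "h \<noteq> 0" "\<bar>h\<bar> \<le> 1/2^n" for n h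
  proof (rule d(2)[OF \<open>h \<noteq> 0\<close>])
    have "(1/2::real)^n \<le> (1/2)^N" using \<open>N \<le> n\<close> by (intro power_decreasing) auto
    then show "\<bar>h\<bar> < d" using that N by (simp add: power_one_over)
  qed
  then show ?thesis by blast
qed

lemma frechet_superdiff_dyadic_bound:
  assumes "\<xi> \<in> frechet_superdiff f x" "0 < \<epsilon>"
  shows "\<exists>N. \<forall>n\<ge>N. \<forall>h. \<bar>h\<bar> \<le> 1/2^n \<longrightarrow> 2^n * (f (x + h) - f x - \<xi> * h) \<le> \<epsilon>"
proof -
  let ?q = "\<lambda>h. (f (x + h) - f x - \<xi> * h) / \<bar>h\<bar>"
  have "Limsup (at 0) (\<lambda>h. ereal (?q h)) < ereal \<epsilon>"
    using assms unfolding frechet_superdiff_def by (auto intro: le_less_trans)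
  then have "eventually (\<lambda>h. ?q h < \<epsilon>) (at 0)"
    using Limsup_lessD by fastforce
  then obtain N where N: "\<forall>n\<ge>N. \<forall>h. h \<noteq> 0 \<longrightarrow> \<bar>h\<bar> \<le> 1/2^n \<longrightarrow> ?q h < \<epsilon>"
    using eventually_at_0_dyadic by blast
  have "2^n * (f (x + h) - f x - \<xi> * h) \<le> \<epsilon>" if "N \<le> n" "\<bar>h\<bar> \<le> 1/2^n" for n h
  proof (cases "h = 0")
    case False
    then have "f (x + h) - f x - \<xi> * h \<le> \<epsilon> * \<bar>h\<bar>"
      using N that by (auto simp: divide_less_eq less_imp_le)
    also have "\<dots> \<le> \<epsilon> / 2^n"
      using that assms(2) by (simp add: mult_left_mono divide_inverse power_one_over)
    finally show ?thesis by (simp add: field_simps)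
  qed (use assms(2) in simp)
  then show ?thesis by blast
qed

lemma frechet_subdiff_dyadic_bound:
  assumes "\<xi> \<in> frechet_subdiff f x" "0 < \<epsilon>"
  shows "\<exists>N. \<forall>n\<ge>N. \<forall>h. \<bar>h\<bar> \<le> 1/2^n \<longrightarrow> -\<epsilon> \<le> 2^n * (f (x + h) - f x - \<xi> * h)"
proof -
  let ?q = "\<lambda>h. (f (x + h) - f x - \<xi> * h) / \<bar>h\<bar>"
  have "ereal (-\<epsilon>) < 0" using assms(2) by simp
  also have "0 \<le> Liminf (at 0) (\<lambda>h. ereal (?q h))"
    using assms(1) unfolding frechet_subdiff_def by simp
  finally have "ereal (-\<epsilon>) < Liminf (at 0) (\<lambda>h. ereal (?q h))" .
  then have "eventually (\<lambda>h. -\<epsilon> < ?q h) (at 0)"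
    using less_LiminfD by fastforce
  then obtain N where N: "\<forall>n\<ge>N. \<forall>h. h \<noteq> 0 \<longrightarrow> \<bar>h\<bar> \<le> 1/2^n \<longrightarrow> -\<epsilon> < ?q h"
    using eventually_at_0_dyadic by blast
  have "-\<epsilon> \<le> 2^n * (f (x + h) - f x - \<xi> * h)" if "N \<le> n" "\<bar>h\<bar> \<le> 1/2^n" for n h
  proof (cases "h = 0")
    case False
    have "-\<epsilon> / 2^n \<le> -\<epsilon> * \<bar>h\<bar>"
      using that assms(2) by (simp add: mult_left_mono divide_inverse power_one_over)
    also have "\<dots> \<le> f (x + h) - f x - \<xi> * h"
      using N that False by (auto simp: less_divide_eq less_imp_le)
    finally show ?thesis by (simp add: field_simps)
  qed (use assms(2) in simp)
  then show ?thesis by blast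
qed

lemma takagi_dyadic_endpoint_increment:
  fixes n :: nat and x \<xi> s :: real
  assumes "s \<in> {0, 1}"
  defines "t \<equiv> dyadic_frac n x"
  shows "2^n * (takagi (x + (s - t)/2^n) - takagi x - \<xi> * ((s - t)/2^n))
      = (partial_slope n x - \<xi>) * (s - t) - takagi t"
proof -
  have "takagi s = 0" using assms(1) takagi_of_int[of 0] takagi_of_int[of 1] by auto
  have "2^n * (takagi (x + (s - t)/2^n) - takagi x - \<xi> * ((s - t)/2^n))
      = 2^n * (takagi (x + (s - t)/2^n) - takagi x) - \<xi> * (s - t)"
    unfolding right_diff_distrib[of "2^n"] by simp
  also have "2^n * (takagi (x + (s - t)/2^n) - takagi x) = partial_slope n x * (s - t) - takagi t"
    using takagi_dyadic_increment[of s n x] assms(1) \<open>takagi s = 0\<close> by (auto simp: t_def)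
  finally show ?thesis by (simp add: left_diff_distrib)
qed

lemma takagi_dyadic_endpoint_bounds:
  fixes R :: "real \<Rightarrow> bool"
  assumes "\<forall>h. \<bar>h\<bar> \<le> 1/2^n \<longrightarrow> R (2^n * (takagi (x + h) - takagi x - \<xi> * h))"
  defines "t \<equiv> dyadic_frac n x" and "c \<equiv> partial_slope n x - \<xi>"
  shows "R (c * (1 - t) - takagi t)" and "R (- c * t - takagi t)"
proof -
  have "R (c * (s - t) - takagi t)" if "s \<in> {0, 1}" for s
  proof -
    have "\<bar>(s - t)/2^n\<bar> \<le> 1/2^n"
      using that dyadic_frac_bounds[of n x] by (auto simp: t_def divide_right_mono)
    with assms(1) show ?thesis
      unfolding t_def c_def takagi_dyadic_endpoint_increment[OF that, of n x \<xi>, symmetric] by blast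
  qed
  from this[of 1] this[of 0] show "R (c * (1 - t) - takagi t)" "R (- c * t - takagi t)" by simp_all
qed

lemma takagi_superdiff_slope_drift:
  assumes "\<xi> \<in> frechet_superdiff takagi x"
  shows "\<exists>N. \<forall>n\<ge>N. (4 \<le> partial_slope n x - \<xi> \<longrightarrow> 1/2 \<le> dyadic_frac n x)
                   \<and> (partial_slope n x - \<xi> \<le> -4 \<longrightarrow> dyadic_frac n x < 1/2)"
proof -
  obtain N where N: "\<forall>n\<ge>N. \<forall>h. \<bar>h\<bar> \<le> 1/2^n \<longrightarrow> 2^n * (takagi (x + h) - takagi x - \<xi> * h) \<le> 1/2"
    using frechet_superdiff_dyadic_bound[OF assms, of "1/2"] by auto
  have "(4 \<le> partial_slope n x - \<xi> \<longrightarrow> 1/2 \<le> dyadic_frac n x)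
      \<and> (partial_slope n x - \<xi> \<le> -4 \<longrightarrow> dyadic_frac n x < 1/2)" if "N \<le> n" for n
  proof -
    define t c where "t = dyadic_frac n x" and "c = partial_slope n x - \<xi>"
    have right: "c * (1 - t) - takagi t \<le> 1/2" and left: "- c * t - takagi t \<le> 1/2"
      using takagi_dyadic_endpoint_bounds[of n "\<lambda>v. v \<le> 1/2"] N that by (auto simp: t_def c_def)
    have "takagi t \<le> 1" by (simp add: t_def takagi_le_one)
    have "1/2 \<le> t" if "4 \<le> c"
    proof (rule ccontr)
      assume "\<not> 1/2 \<le> t"
      then have "2 \<le> 4 * (1 - t)" by simp
      also have "\<dots> \<le> c * (1 - t)" using that \<open>\<not> 1/2 \<le> t\<close> by (intro mult_right_mono) auto
      finally show False using right \<open>takagi t \<le> 1\<close> by linarith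
    qed
    moreover have "t < 1/2" if "c \<le> -4"
    proof (rule ccontr)
      assume "\<not> t < 1/2"
      then have "2 \<le> 4 * t" by simp
      also have "\<dots> \<le> - c * t" using that \<open>\<not> t < 1/2\<close> by (intro mult_right_mono) auto
      finally show False using left \<open>takagi t \<le> 1\<close> by linarith
    qed
    ultimately show ?thesis by (simp add: t_def c_def)
  qed
  then show ?thesis by blast
qed

lemma takagi_subdiff_slope_repel:
  assumes "\<xi> \<in> frechet_subdiff takagi x"
  shows "\<exists>N. \<forall>n\<ge>N. (4 \<le> partial_slope n x - \<xi> \<longrightarrow> dyadic_frac n x < 1/2)
                   \<and> (partial_slope n x - \<xi> \<le> -4 \<longrightarrow> 1/2 \<le> dyadic_frac n x)"
proof -
  obtain N where N: "\<forall>n\<ge>N. \<forall>h. \<bar>h\<bar> \<le> 1/2^n \<longrightarrow> -(1/2) \<le> 2^n * (takagi (x + h) - takagi x - \<xi> * h)"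
    using frechet_subdiff_dyadic_bound[OF assms, of "1/2"] by auto
  have "(4 \<le> partial_slope n x - \<xi> \<longrightarrow> dyadic_frac n x < 1/2)
      \<and> (partial_slope n x - \<xi> \<le> -4 \<longrightarrow> 1/2 \<le> dyadic_frac n x)" if "N \<le> n" for n
  proof -
    define t c where "t = dyadic_frac n x" and "c = partial_slope n x - \<xi>"
    have right: "-(1/2) \<le> c * (1 - t) - takagi t" and left: "-(1/2) \<le> - c * t - takagi t"
      using takagi_dyadic_endpoint_bounds[of n "\<lambda>v. -(1/2) \<le> v"] N that by (auto simp: t_def c_def)
    have "0 \<le> takagi t" by (simp add: t_def takagi_nonneg)
    have "t < 1/2" if "4 \<le> c"
    proof (rule ccontr)
      assume "\<not> t < 1/2"
      then have "2 \<le> 4 * t" by simp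
      also have "\<dots> \<le> c * t" using that \<open>\<not> t < 1/2\<close> by (intro mult_right_mono) auto
      finally show False using left \<open>0 \<le> takagi t\<close> by linarith
    qed
    moreover have "1/2 \<le> t" if "c \<le> -4"
    proof (rule ccontr)
      assume "\<not> 1/2 \<le> t"
      then have "2 \<le> 4 * (1 - t)" by simp
      also have "\<dots> \<le> - c * (1 - t)" using that \<open>\<not> 1/2 \<le> t\<close> by (intro mult_right_mono) auto
      finally show False using right \<open>0 \<le> takagi t\<close> by linarith
    qed
    ultimately show ?thesis by (simp add: t_def c_def)
  qed
  then show ?thesis by blast
qed

section \<open>Walks with unit steps\<close>

lemma walk_along_run:
  fixes c :: "nat \<Rightarrow> real"
  assumes step: "\<And>n. c (Suc n) = c n + (if d n then 1 else -1)"
  shows "(\<forall>i<L. d (k + i)) \<Longrightarrow> c (k + L) = c k + L"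
    and "(\<forall>i<L. \<not> d (k + i)) \<Longrightarrow> c (k + L) = c k - L"
  by (induction L) (auto simp: step)

lemma walk_attracting_no_long_runs:
  fixes c :: "nat \<Rightarrow> real" and a :: real
  assumes step: "\<And>n. c (Suc n) = c n + (if d n then 1 else -1)"
    and down: "\<And>n. N \<le> n \<Longrightarrow> a \<le> c n \<Longrightarrow> \<not> d n"
    and up: "\<And>n. N \<le> n \<Longrightarrow> c n \<le> -a \<Longrightarrow> d n"
  shows "\<exists>L. \<forall>k\<ge>N. \<not> (\<forall>i<L. d (k + i))"
proof -
  define B where "B = max \<bar>c N\<bar> (\<bar>a\<bar> + 1)"
  have "\<bar>a\<bar> + 1 \<le> B" by (simp add: B_def)
  have bounded: "\<bar>c n\<bar> \<le> B" if "N \<le> n" for n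
    using that
  proof (induction n rule: dec_induct)
    case (step m)
    have "d m \<Longrightarrow> c m < a" "\<not> d m \<Longrightarrow> -a < c m"
      using down[OF step.hyps(1)] up[OF step.hyps(1)] by force+
    with step.IH \<open>\<bar>a\<bar> + 1 \<le> B\<close> show ?case
      by (cases "d m") (simp_all add: assms(1) abs_le_iff)
  qed (simp add: B_def)
  have "\<not> (\<forall>i<nat \<lceil>2*B\<rceil> + 1. d (k + i))" if "N \<le> k" for k
  proof
    assume "\<forall>i<nat \<lceil>2*B\<rceil> + 1. d (k + i)"
    from walk_along_run(1)[OF step this] bounded[of k] bounded[of "k + (nat \<lceil>2*B\<rceil> + 1)"] that
    show False by linarith
  qed
  then show ?thesis by blast
qed

lemma walk_repelling_after_run:
  fixes c :: "nat \<Rightarrow> real" and a :: real and r :: nat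
  assumes step: "\<And>n. c (Suc n) = c n + (if d n then 1 else -1)"
    and up: "\<And>n. N \<le> n \<Longrightarrow> a \<le> c n \<Longrightarrow> d n"
    and down: "\<And>n. N \<le> n \<Longrightarrow> c n \<le> -a \<Longrightarrow> \<not> d n"
    and "0 < a" "2 * a \<le> r" "N \<le> k" and run: "\<forall>i<r. \<not> d (k + i)" and "k + r \<le> m"
  shows "\<not> d m"
proof -
  have "0 < r" using \<open>0 < a\<close> \<open>2 * a \<le> r\<close> by simp
  then have "c k < a" using up[OF \<open>N \<le> k\<close>] run by force
  then have "c (k + r) \<le> -a" using walk_along_run(2)[OF step run] \<open>2 * a \<le> r\<close> by simp
  have "c m \<le> -a \<and> \<not> d m" using \<open>k + r \<le> m\<close>
  proof (induction m rule: dec_induct)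
    case base
    then show ?case using \<open>c (k + r) \<le> -a\<close> down[of "k + r"] \<open>N \<le> k\<close> by simp
  next
    case (step m)
    then have "c (Suc m) \<le> -a" using assms(1)[of m] \<open>0 < a\<close> by simp
    then show ?case using down[of "Suc m"] step.hyps \<open>N \<le> k\<close> by simp
  qed
  then show ?thesis ..
qed

section \<open>Points with long binary runs\<close>

text \<open>dyadic_frac n x < 1/2 exactly when the (n+1)-st binary digit of frac x is 0, so
  has_dyadic_runs (\<lambda>u. u < 1/2) x says that beyond every position the binary expansion of x
  contains arbitrarily long runs of zeros.\<close>
definition has_dyadic_runs :: "(real \<Rightarrow> bool) \<Rightarrow> real \<Rightarrow> bool" where
  "has_dyadic_runs P x \<longleftrightarrow> (\<forall>L N. \<exists>k\<ge>N. \<forall>i<L. P (dyadic_frac (k + i) x))"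

lemma takagi_superdiff_empty:
  assumes "has_dyadic_runs (\<lambda>u. u < 1/2) x"
  shows "frechet_superdiff takagi x = {}"
proof (rule equals0I)
  fix \<xi> assume "\<xi> \<in> frechet_superdiff takagi x"
  from takagi_superdiff_slope_drift[OF this] obtain N where N:
    "\<forall>n\<ge>N. (4 \<le> partial_slope n x - \<xi> \<longrightarrow> 1/2 \<le> dyadic_frac n x)
          \<and> (partial_slope n x - \<xi> \<le> -4 \<longrightarrow> dyadic_frac n x < 1/2)" by blast
  obtain L where "\<forall>k\<ge>N. \<not> (\<forall>i<L. dyadic_frac (k + i) x < 1/2)"
  proof (rule walk_attracting_no_long_runs[where a = 4, THEN exE])
    show "partial_slope (Suc n) x - \<xi> = partial_slope n x - \<xi> + (if dyadic_frac n x < 1/2 then 1 else -1)"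
      for n by (simp add: partial_slope_Suc)
  qed (use N in auto)
  with assms show False unfolding has_dyadic_runs_def by blast
qed

lemma takagi_subdiff_empty:
  assumes "has_dyadic_runs (\<lambda>u. u < 1/2) x" "has_dyadic_runs (\<lambda>u. 1/2 \<le> u) x"
  shows "frechet_subdiff takagi x = {}"
proof (rule equals0I)
  fix \<xi> assume "\<xi> \<in> frechet_subdiff takagi x"
  from takagi_subdiff_slope_repel[OF this] obtain N where N:
    "\<forall>n\<ge>N. (4 \<le> partial_slope n x - \<xi> \<longrightarrow> dyadic_frac n x < 1/2)
          \<and> (partial_slope n x - \<xi> \<le> -4 \<longrightarrow> 1/2 \<le> dyadic_frac n x)" by blast
  obtain k where k: "N \<le> k" "\<forall>i<8. \<not> dyadic_frac (k + i) x < 1/2"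
    using assms(2) unfolding has_dyadic_runs_def by (meson not_less)
  obtain m where "k + 8 \<le> m" "dyadic_frac m x < 1/2"
    using assms(1) unfolding has_dyadic_runs_def by (metis add_0_right zero_less_one)
  moreover have "\<not> dyadic_frac m x < 1/2" if "k + 8 \<le> m" for m
  proof (rule walk_repelling_after_run[where N = N and k = k and a = 4 and r = 8])
    show "partial_slope (Suc n) x - \<xi> = partial_slope n x - \<xi> + (if dyadic_frac n x < 1/2 then 1 else -1)"
      for n by (simp add: partial_slope_Suc)
  qed (use N k that in auto)
  ultimately show False by blast
qed

section \<open>Long binary runs occur almost everywhere\<close>

lemma ennreal_eq_0_if_le_mult_self:
  fixes a :: ennreal and c :: real
  assumes "a \<le> ennreal c * a" "c < 1" "a \<noteq> top"
  shows "a = 0"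
proof -
  obtain r where r: "a = ennreal r" "0 \<le> r" using assms(3) by (cases a) auto
  show ?thesis
  proof (cases "0 \<le> c")
    case True
    then have "r \<le> c * r" using assms(1) r by (simp add: ennreal_mult[symmetric])
    then have "r = 0" using r(2) assms(2) by (smt (verit) mult_less_cancel_right2)
    then show ?thesis using r by simp
  next
    case False
    then show ?thesis using assms(1) by (simp add: ennreal_neg)
  qed
qed

lemma affine_image_sets_lebesgue:
  fixes c d :: real
  assumes "A \<in> sets lebesgue"
  shows "(\<lambda>y. c * y + d) ` A \<in> sets lebesgue"
  by (rule differentiable_image_in_sets_lebesgue[OF assms]) (auto intro!: derivative_intros)

lemma dyadic_subinterval_cover:
  fixes B :: "real set" and L m0 :: nat and z :: int
  assumes invariant: "\<And>x. x \<in> B \<Longrightarrow> frac (2^L * x) \<in> B"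
    and avoids: "\<And>x. x \<in> B \<Longrightarrow> \<lfloor>2^L * x\<rfloor> mod 2^L \<noteq> int m0"
  shows "B \<inter> {of_int z..<of_int z + 1}
    \<subseteq> (\<Union>m \<in> {..<2^L} - {m0}. (\<lambda>y. 1/2^L * y + (of_int z + real m / 2^L)) ` (B \<inter> {0..<1}))"
proof
  fix x assume x: "x \<in> B \<inter> {of_int z..<of_int z + 1}"
  define q where "q = \<lfloor>2^L * x\<rfloor> - 2^L * z"
  have "2^L * x < 2^L * (of_int z + 1)" using x by (intro mult_strict_left_mono) auto
  then have "real_of_int (2^L * z) \<le> 2^L * x" "2^L * x < real_of_int (2^L * z + 2^L)"
    using x by (simp_all add: distrib_left)
  then have "2^L * z \<le> \<lfloor>2^L * x\<rfloor>" "\<lfloor>2^L * x\<rfloor> < 2^L * z + 2^L"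
    by (simp_all only: le_floor_iff floor_less_iff)
  then have q: "0 \<le> q" "q < 2^L" unfolding q_def by simp_all
  have "\<lfloor>2^L * x\<rfloor> = q + 2^L * z" by (simp add: q_def)
  then have "\<lfloor>2^L * x\<rfloor> mod 2^L = q" using q by simp
  then have "q \<noteq> int m0" using avoids x by auto
  then have "nat q \<in> {..<2^L} - {m0}" using q by (auto simp: nat_less_iff)
  moreover have "frac (2^L * x) \<in> B \<inter> {0..<1}" using invariant x by (simp add: frac_lt_1)
  moreover have "x = 1/2^L * frac (2^L * x) + (of_int z + real (nat q) / 2^L)"
    using q by (simp add: q_def frac_def field_simps)
  ultimately show "x \<in> (\<Union>m \<in> {..<2^L} - {m0}. (\<lambda>y. 1/2^L * y + (of_int z + real m / 2^L)) ` (B \<inter> {0..<1}))"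
    by blast
qed

lemma emeasure_dyadic_invariant_le:
  fixes B :: "real set" and L m0 :: nat and z :: int
  assumes "B \<in> sets lebesgue" "m0 < 2^L"
    and "\<And>x. x \<in> B \<Longrightarrow> frac (2^L * x) \<in> B"
    and "\<And>x. x \<in> B \<Longrightarrow> \<lfloor>2^L * x\<rfloor> mod 2^L \<noteq> int m0"
  shows "emeasure lebesgue (B \<inter> {of_int z..<of_int z + 1})
    \<le> ennreal ((2^L - 1) / 2^L) * emeasure lebesgue (B \<inter> {0..<1})"
proof -
  define A where "A = B \<inter> {0..<1}"
  define I where "I = {..<(2::nat)^L} - {m0}"
  define f where "f m y = 1/2^L * y + (of_int z + real m / 2^L)" for m :: nat and y :: real
  have "A \<in> sets lebesgue" unfolding A_def by (intro sets.Int assms(1)) simp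
  then have fA: "f m ` A \<in> sets lebesgue" for m
    unfolding f_def[abs_def] by (rule affine_image_sets_lebesgue)
  have "emeasure lebesgue (B \<inter> {of_int z..<of_int z + 1}) \<le> emeasure lebesgue (\<Union>m\<in>I. f m ` A)"
    using dyadic_subinterval_cover[OF assms(3,4), of z, folded A_def I_def] fA
    by (intro emeasure_mono) (auto simp: f_def[abs_def])
  also have "\<dots> \<le> (\<Sum>m\<in>I. emeasure lebesgue (f m ` A))"
    using fA by (intro emeasure_subadditive_finite) (auto simp: I_def)
  also have "\<dots> = of_nat (card I) * (ennreal (1/2^L) * emeasure lebesgue A)"
    using emeasure_lebesgue_affine[of "1/2^L" _ A] by (simp add: f_def[abs_def])
  also have "card I = 2^L - 1" using assms(2) by (simp add: I_def card_Diff_singleton)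
  also have "of_nat (2^L - 1) * (ennreal (1/2^L) * emeasure lebesgue A)
      = ennreal ((2^L - 1) / 2^L) * emeasure lebesgue A"
    unfolding mult.assoc[symmetric]
    by (simp add: ennreal_of_nat_eq_real_of_nat ennreal_mult'[symmetric] divide_inverse of_nat_diff)
  finally show ?thesis by (simp add: A_def)
qed

lemma null_sets_if_dyadic_invariant:
  fixes B :: "real set" and L m0 :: nat
  assumes "B \<in> sets lebesgue" "m0 < 2^L"
    and "\<And>x. x \<in> B \<Longrightarrow> frac (2^L * x) \<in> B"
    and "\<And>x. x \<in> B \<Longrightarrow> \<lfloor>2^L * x\<rfloor> mod 2^L \<noteq> int m0"
  shows "B \<in> null_sets lebesgue"
proof -
  note bound = emeasure_dyadic_invariant_le[OF assms]
  have "emeasure lebesgue (B \<inter> {0..<1}) \<le> emeasure lebesgue {0..<(1::real)}"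
    by (intro emeasure_mono) auto
  then have "emeasure lebesgue (B \<inter> {0..<1}) \<noteq> top" by (auto simp: top_unique)
  with bound[of 0] have "emeasure lebesgue (B \<inter> {0..<1}) = 0"
    by (intro ennreal_eq_0_if_le_mult_self) auto
  then have "B \<inter> {of_int z..<of_int z + 1} \<in> null_sets lebesgue" for z
    using bound[of z] assms(1) by (auto intro!: null_setsI sets.Int)
  then have "(\<Union>z::int. B \<inter> {of_int z..<of_int z + 1}) \<in> null_sets lebesgue" by blast
  also have "(\<Union>z::int. B \<inter> {of_int z..<of_int z + 1}) = B"
  proof (intro antisym subsetI)
    fix x assume "x \<in> B"
    then show "x \<in> (\<Union>z::int. B \<inter> {of_int z..<of_int z + 1})" by (intro UN_I[of "\<lfloor>x\<rfloor>"]) auto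
  qed auto
  finally show ?thesis .
qed

definition dyadic_run_free :: "(real \<Rightarrow> bool) \<Rightarrow> nat \<Rightarrow> real set" where
  "dyadic_run_free P L = {x. \<forall>k. \<exists>i<L. \<not> P (dyadic_frac (k + i) x)}"

lemma dyadic_frac_measurable [measurable]: "dyadic_frac k \<in> borel_measurable borel"
  unfolding dyadic_frac_def[abs_def] frac_def by measurable

lemma dyadic_frac_frac: "dyadic_frac j (frac (2^L * x)) = dyadic_frac (j + L) x"
proof -
  have "2^j * frac (2^L * x) = 2^(j + L) * x + of_int (- (2^j * \<lfloor>2^L * x\<rfloor>))"
    by (simp add: frac_def power_add algebra_simps)
  then show ?thesis unfolding dyadic_frac_def by (simp only: frac_add_of_int_right)
qed

lemma frac_in_dyadic_run_free:
  assumes "x \<in> dyadic_run_free P L"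
  shows "frac (2^L * x) \<in> dyadic_run_free P L"
  unfolding dyadic_run_free_def
proof (intro CollectI allI)
  fix k
  from assms obtain i where "i < L" "\<not> P (dyadic_frac (k + L + i) x)"
    unfolding dyadic_run_free_def by blast
  then show "\<exists>i<L. \<not> P (dyadic_frac (k + i) (frac (2^L * x)))"
    unfolding dyadic_frac_frac by (intro exI[of _ i]) (simp add: ac_simps)
qed

lemma in_dyadic_run_free_if_not_has_dyadic_runs:
  assumes "\<not> has_dyadic_runs P x"
  obtains L where "x \<in> dyadic_run_free P L"
proof -
  from assms obtain L N where LN: "\<forall>k\<ge>N. \<exists>i<L. \<not> P (dyadic_frac (k + i) x)"
    unfolding has_dyadic_runs_def by blast
  have "\<exists>i<L + N. \<not> P (dyadic_frac (k + i) x)" for k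
  proof -
    obtain i where "i < L" "\<not> P (dyadic_frac (max k N + i) x)" using LN[rule_format, OF max.cobounded2] by blast
    then show ?thesis by (intro exI[of _ "max k N - k + i"]) auto
  qed
  then show ?thesis using that unfolding dyadic_run_free_def by blast
qed

lemma dyadic_frac_in_block:
  assumes "\<lfloor>2^L * x\<rfloor> mod 2^L = int m" "i \<le> L"
  shows "dyadic_frac i x = frac ((real m + frac (2^L * x)) / 2^(L - i))"
proof -
  define q where "q = \<lfloor>2^L * x\<rfloor> div 2^L"
  have "\<lfloor>2^L * x\<rfloor> = 2^L * q + int m" unfolding q_def using assms(1) by (metis mult_div_mod_eq)
  then have "2^L * x = 2^L * of_int q + (real m + frac (2^L * x))"
    unfolding frac_def by simp
  moreover have "(2::real)^L = 2^(L - i) * 2^i" using assms(2) by (simp flip: power_add)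
  ultimately have "2^i * x = (real m + frac (2^L * x)) / 2^(L - i) + of_int (2^i * q)"
    by (simp add: field_simps)
  then show ?thesis unfolding dyadic_frac_def by (simp only: frac_add_of_int_right)
qed

lemma dyadic_frac_in_lowest_block:
  assumes "\<lfloor>2^L * x\<rfloor> mod 2^L = int 0" "i < L"
  shows "dyadic_frac i x < 1/2"
proof -
  define f where "f = frac (2^L * x)"
  have "0 \<le> f" "f < 1" by (simp_all add: f_def frac_lt_1)
  moreover have "(2::real) \<le> 2^(L - i)" using assms(2) power_increasing[of 1 "L - i" "2::real"] by simp
  ultimately have "0 \<le> f / 2^(L - i)" "f / 2^(L - i) < 1/2" by (simp_all add: divide_less_eq)
  from dyadic_frac_in_block[OF assms(1)] assms(2)
  have "dyadic_frac i x = frac (f / 2^(L - i))" by (simp add: f_def)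
  also have "\<dots> = f / 2^(L - i)"
    using \<open>0 \<le> f / 2^(L - i)\<close> \<open>f / 2^(L - i) < 1/2\<close> unfolding frac_eq by linarith
  finally show ?thesis using \<open>f / 2^(L - i) < 1/2\<close> by linarith
qed

lemma dyadic_frac_in_highest_block:
  assumes "\<lfloor>2^L * x\<rfloor> mod 2^L = int (2^L - 1)" "i < L"
  shows "1/2 \<le> dyadic_frac i x"
proof -
  define f where "f = frac (2^L * x)"
  have "0 \<le> f" "f < 1" by (simp_all add: f_def frac_lt_1)
  moreover have "(2::real) \<le> 2^(L - i)" using assms(2) power_increasing[of 1 "L - i" "2::real"] by simp
  ultimately have "0 < (1 - f) / 2^(L - i)" "(1 - f) / 2^(L - i) \<le> 1/2" by (simp_all add: divide_le_eq)
  from dyadic_frac_in_block[OF assms(1)] assms(2)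
  have block: "dyadic_frac i x = frac ((real (2^L - 1) + f) / 2^(L - i))" by (simp add: f_def)
  have "(2::real)^L = 2^i * 2^(L - i)" using assms(2) by (simp flip: power_add)
  then have "(real (2^L - 1) + f) / 2^(L - i) = 1 - (1 - f) / 2^(L - i) + of_int (2^i - 1)"
    by (simp add: of_nat_diff field_simps)
  with block have "dyadic_frac i x = frac (1 - (1 - f) / 2^(L - i))"
    by (simp only: frac_add_of_int_right)
  also have "\<dots> = 1 - (1 - f) / 2^(L - i)"
    using \<open>0 < (1 - f) / 2^(L - i)\<close> \<open>(1 - f) / 2^(L - i) \<le> 1/2\<close> unfolding frac_eq by linarith
  finally show ?thesis using \<open>(1 - f) / 2^(L - i) \<le> 1/2\<close> by linarith
qed

lemma AE_has_dyadic_runs: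
  assumes P [measurable]: "Measurable.pred borel P"
    and block: "\<And>L. \<exists>m0<2^L. \<forall>x. \<lfloor>2^L * x\<rfloor> mod 2^L = int m0 \<longrightarrow> (\<forall>i<L. P (dyadic_frac i x))"
  shows "AE x in lborel. has_dyadic_runs P x"
proof -
  have "dyadic_run_free P L \<in> null_sets lebesgue" for L
  proof -
    obtain m0 where m0: "m0 < 2^L" "\<forall>x. \<lfloor>2^L * x\<rfloor> mod 2^L = int m0 \<longrightarrow> (\<forall>i<L. P (dyadic_frac i x))"
      using block by blast
    have "dyadic_run_free P L \<in> sets borel" unfolding dyadic_run_free_def by measurable
    then have meas: "dyadic_run_free P L \<in> sets lebesgue" by (simp add: sets_completionI_sets)
    have avoids: "\<lfloor>2^L * x\<rfloor> mod 2^L \<noteq> int m0" if "x \<in> dyadic_run_free P L" for x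
    proof
      assume "\<lfloor>2^L * x\<rfloor> mod 2^L = int m0"
      with m0(2) have "\<forall>i<L. P (dyadic_frac (0 + i) x)" by simp
      with that show False unfolding dyadic_run_free_def by blast
    qed
    show ?thesis
      using null_sets_if_dyadic_invariant[OF meas m0(1) frac_in_dyadic_run_free avoids] .
  qed
  then have "(\<Union>L. dyadic_run_free P L) \<in> null_sets lebesgue" by blast
  moreover have "{x \<in> space lebesgue. \<not> has_dyadic_runs P x} \<subseteq> (\<Union>L. dyadic_run_free P L)"
  proof
    fix x assume "x \<in> {x \<in> space lebesgue. \<not> has_dyadic_runs P x}"
    then obtain L where "x \<in> dyadic_run_free P L"
      using in_dyadic_run_free_if_not_has_dyadic_runs by auto
    then show "x \<in> (\<Union>L. dyadic_run_free P L)" by blast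
  qed
  ultimately have "AE x in lebesgue. has_dyadic_runs P x" by (rule AE_I')
  then show ?thesis by (simp add: AE_completion_iff)
qed

lemma AE_has_dyadic_runs_lower_half: "AE x in lborel. has_dyadic_runs (\<lambda>u. u < 1/2) x"
proof (rule AE_has_dyadic_runs)
  show "\<exists>m0<2^L. \<forall>x. \<lfloor>2^L * x\<rfloor> mod 2^L = int m0 \<longrightarrow> (\<forall>i<L. dyadic_frac i x < 1/2)" for L
    using dyadic_frac_in_lowest_block by (intro exI[of _ 0]) auto
qed measurable

lemma AE_has_dyadic_runs_upper_half: "AE x in lborel. has_dyadic_runs (\<lambda>u. 1/2 \<le> u) x"
proof (rule AE_has_dyadic_runs)
  show "\<exists>m0<2^L. \<forall>x. \<lfloor>2^L * x\<rfloor> mod 2^L = int m0 \<longrightarrow> (\<forall>i<L. 1/2 \<le> dyadic_frac i x)" for L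
    using dyadic_frac_in_highest_block by (intro exI[of _ "2^L - 1"]) auto
qed measurable

theorem corollary2p11:
  shows "AE x in lborel. frechet_superdiff takagi x = {} \<and> frechet_subdiff takagi x = {}"
  using AE_has_dyadic_runs_lower_half AE_has_dyadic_runs_upper_half
  by eventually_elim (intro conjI takagi_superdiff_empty takagi_subdiff_empty)

end
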